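(* Let $1\le d<n$, let $w\le v$ (Bruhat order) in $W^{P_d}=\{u\in S_n\mid u_1<\cdots<u_d,\ u_{d+1}<\cdots<u_n\}$, and let $\lambda=\lambda_w$, $\mu=\lambda_v$. Then the map $f$ defined by $$f(T)=\{(x,x+j-i)\mid (i,j)\in D_\lambda,\ x\in T(i,j)\}$$ is a bijection from $\mathcal T_\lambda(\mu)$ to $\mathcal E_\lambda(\mu)$.
   Context: For $u\in W^{P_d}$, $\lambda_u$ is the partition $(\lambda_u)_i=u_{d+1-i}-(d+1-i)$, $i=1,\ldots,d$; since $w\le v$, $\lambda_i\le\mu_i$ for all $i$. The Young diagram $D_\lambda$ is the set of boxes $(i,j)$ with $1\le i\le d$, $1\le j\le\lambda_i$ (rows numbered top to bottom, columns left to right), so $D_\lambda\subseteq D_\mu$. Excitations: for $C\subseteq D_\mu$ and $(i,j)\in C$ with $(i+1,j),(i,j+1),(i+1,j+1)\in D_\mu\setminus C$, a type 1 excitation replaces $C$ by $C\setminus\{(i,j)\}\cup\{(i+1,j+1)\}$ and a type 2 excitation replaces $C$ by $C\cup\{(i+1,j+1)\}$; $\mathcal E_\lambda(\mu)$ is the set of subsets of $D_\mu$ obtained from $D_\lambda$ by sequences of excitations. A set-valued filling of $D_\lambda$ assigns to each box $(i,j)$ a nonempty subset $T(i,j)\subseteq\{1,\ldots,d\}$; it is semistandard (a set-valued tableau) if every entry of box $(i,j)$ is $\le$ every entry of box $(i,j+1)$ and $<$ every entry of box $(i+1,j)$ whenever these boxes exist. It is restricted by $\mu$ if $x+j-i\le\mu_x$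 for every box $(i,j)$ and every $x\in T(i,j)$. $\mathcal T_\lambda(\mu)$ is the set of set-valued tableaux of shape $\lambda$ restricted by $\mu$. *)

theory Defs
  imports Main "HOL-Combinatorics.Transposition" "HOL-Combinatorics.Permutations"
begin

(* Permutations of S_n are functions nat => nat permuting {1..n}; u i is u_i. *)

definition bruhat_step :: "nat \<Rightarrow> ((nat \<Rightarrow> nat) \<times> (nat \<Rightarrow> nat)) set" where
  "bruhat_step n = {(u, u \<circ> transpose i j) | u i j.
      u permutes {1..n} \<and> 1 \<le> i \<and> i < j \<and> j \<le> n \<and> u i < u j}"

definition bruhat_le :: "nat \<Rightarrow> (nat \<Rightarrow> nat) \<Rightarrow> (nat \<Rightarrow> nat) \<Rightarrow> bool" where
  "bruhat_le n w v \<longleftrightarrow> w permutes {1..n} \<and> (w, v) \<in> (bruhat_step n)\<^sup>*"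

definition grassmannian :: "nat \<Rightarrow> nat \<Rightarrow> (nat \<Rightarrow> nat) set" where
  "grassmannian n d = {u. u permutes {1..n} \<and>
      (\<forall>i j. 1 \<le> i \<and> i < j \<and> j \<le> d \<longrightarrow> u i < u j) \<and>
      (\<forall>i j. d + 1 \<le> i \<and> i < j \<and> j \<le> n \<longrightarrow> u i < u j)}"

definition lam :: "nat \<Rightarrow> (nat \<Rightarrow> nat) \<Rightarrow> nat \<Rightarrow> nat" where
  "lam d u i = u (d + 1 - i) - (d + 1 - i)"

definition young :: "nat \<Rightarrow> (nat \<Rightarrow> nat) \<Rightarrow> (nat \<times> nat) set" where
  "young d la = {(i, j). 1 \<le> i \<and> i \<le> d \<and> 1 \<le> j \<and> j \<le> la i}"

definition excite_step :: "nat \<Rightarrow> (nat \<Rightarrow> nat) \<Rightarrow> ((nat \<times> nat) set \<times> (nat \<times> nat) set) set" where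
  "excite_step d mu = {(C, C') | C C' i j.
      C \<subseteq> young d mu \<and> (i, j) \<in> C \<and>
      (i + 1, j) \<in> young d mu - C \<and> (i, j + 1) \<in> young d mu - C \<and>
      (i + 1, j + 1) \<in> young d mu - C \<and>
      (C' = (C - {(i, j)}) \<union> {(i + 1, j + 1)} \<or> C' = C \<union> {(i + 1, j + 1)})}"

definition excitations :: "nat \<Rightarrow> (nat \<Rightarrow> nat) \<Rightarrow> (nat \<Rightarrow> nat) \<Rightarrow> (nat \<times> nat) set set" where
  "excitations d la mu = {C. (young d la, C) \<in> (excite_step d mu)\<^sup>*}"

(* T_lambda(mu): set-valued tableaux of shape lambda restricted by mu.
   A filling is a function on boxes; it is required to be {} outside D_lambda
   so that distinct fillings are distinct functions. *)
definition sv_tableaux :: "nat \<Rightarrow> (nat \<Rightarrow> nat) \<Rightarrow> (nat \<Rightarrow> nat) \<Rightarrow> (nat \<times> nat \<Rightarrow> nat set) set" where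
  "sv_tableaux d la mu = {T.
      (\<forall>b. b \<notin> young d la \<longrightarrow> T b = {}) \<and>
      (\<forall>b \<in> young d la. T b \<noteq> {} \<and> T b \<subseteq> {1..d}) \<and>
      (\<forall>i j. (i, j) \<in> young d la \<and> (i, j + 1) \<in> young d la \<longrightarrow>
         (\<forall>a \<in> T (i, j). \<forall>b \<in> T (i, j + 1). a \<le> b)) \<and>
      (\<forall>i j. (i, j) \<in> young d la \<and> (i + 1, j) \<in> young d la \<longrightarrow>
         (\<forall>a \<in> T (i, j). \<forall>b \<in> T (i + 1, j). a < b)) \<and>
      (\<forall>i j. (i, j) \<in> young d la \<longrightarrow>
         (\<forall>x \<in> T (i, j). int x + int j - int i \<le> int (mu x)))}"

(* the map f(T) = {(x, x+j-i) | (i,j) in D_lambda, x in T(i,j)} ; for tableaux x >= i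
   so the natural-number subtraction is exact *)
definition fmap :: "nat \<Rightarrow> (nat \<Rightarrow> nat) \<Rightarrow> (nat \<times> nat \<Rightarrow> nat set) \<Rightarrow> (nat \<times> nat) set" where
  "fmap d la T = {(x, x + j - i) | x i j. (i, j) \<in> young d la \<and> x \<in> T (i, j)}"

end

theory Submission
  imports Defs
begin

text \<open>The map \<open>f\<close> sends an entry \<open>x\<close> of box \<open>(i, j)\<close> to the cell \<open>(x, x + j - i)\<close> on the
  diagonal of that box. Columns of a tableau increase strictly, so an entry of row \<open>i\<close> is at
  least \<open>i\<close>, and the entries along a diagonal increase strictly, so \<open>f\<close> never merges two entries.

  Raising an entry \<open>a\<close> of a box to \<open>a + 1\<close> (replacing \<open>a\<close>, or adding \<open>a + 1\<close>) is an
  excitation of type 1 (type 2) of \<open>f T\<close>, and the tableau conditions of the raised filling are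
  exactly the emptiness conditions of that excitation. Since the filling of each box by its row
  index is mapped to \<open>D\<^sub>\<lambda>\<close>, every excitation is an image. Conversely, lowering the least entry
  exceeding its row index, in the leftmost box where it does so, gives a tableau mapped to a
  predecessor of \<open>f T\<close> and decreases the sum of the entries; so every image is an excitation.
  Injectivity follows by recovering \<open>T\<close> from \<open>f T\<close> box by box, in order of \<open>i + j\<close>.

  The hypotheses on \<open>w\<close> and \<open>v\<close> only enter through \<open>D\<^sub>\<lambda> \<subseteq> D\<^sub>\<mu>\<close> and the antitonicity of both
  partitions; the former holds because a Bruhat step never decreases the number of values
  \<open>\<ge> t\<close> among the first \<open>d\<close> positions.\<close>

subsection \<open>Shapes of Grassmannian permutations\<close>

lemma increasing_on_interval_gap:
  fixes u :: "nat \<Rightarrow> nat"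
  assumes inc: "\<And>a b. 1 \<le> a \<Longrightarrow> a < b \<Longrightarrow> b \<le> d \<Longrightarrow> u a < u b"
    and "1 \<le> p" and "p \<le> q" and "q \<le> d"
  shows "u p + (q - p) \<le> u q"
  using \<open>p \<le> q\<close> \<open>q \<le> d\<close>
proof (induction q rule: dec_induct)
  case base
  then show ?case by simp
next
  case (step q)
  then have "u q < u (Suc q)" using inc \<open>1 \<le> p\<close> by simp
  with step show ?case by simp
qed

lemma lam_antimono:
  assumes inc: "\<And>a b. 1 \<le> a \<Longrightarrow> a < b \<Longrightarrow> b \<le> d \<Longrightarrow> u a < u b"
    and "1 \<le> i" and "i \<le> i'" and "i' \<le> d"
  shows "lam d u i' \<le> lam d u i"
proof -
  have "u (d + 1 - i') + ((d + 1 - i) - (d + 1 - i')) \<le> u (d + 1 - i)"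
    by (rule increasing_on_interval_gap[OF inc]) (use assms in auto)
  then show ?thesis
    using assms by (simp add: lam_def)
qed

lemma grassmannian_increasing:
  "u \<in> grassmannian n d \<Longrightarrow> 1 \<le> a \<Longrightarrow> a < b \<Longrightarrow> b \<le> d \<Longrightarrow> u a < u b"
  by (simp add: grassmannian_def)

definition count_ge :: "nat \<Rightarrow> (nat \<Rightarrow> nat) \<Rightarrow> nat \<Rightarrow> nat" where
  "count_ge d u t = card {k \<in> {1..d}. t \<le> u k}"

text \<open>A Bruhat step either permutes two positions inside \<open>{1..d}\<close> or raises the value at one
  of them, so it never decreases the number of large values among the first \<open>d\<close>.\<close>

lemma count_ge_bruhat_step:
  assumes "(u, u') \<in> bruhat_step n"
  shows "count_ge d u t \<le> count_ge d u' t"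
proof -
  obtain i j where u': "u' = u \<circ> transpose i j" and ij: "1 \<le> i" "i < j" "u i < u j"
    using assms unfolding bruhat_step_def by blast
  let ?A = "{k \<in> {1..d}. t \<le> u k}" and ?B = "{k \<in> {1..d}. t \<le> u' k}"
  show ?thesis
    unfolding count_ge_def
  proof (cases "j \<le> d")
    case True
    have "k \<in> ?B \<longleftrightarrow> transpose i j k \<in> ?A" for k
      using True ij u' by (auto simp: transpose_def)
    moreover have "k \<in> transpose i j ` ?A \<longleftrightarrow> transpose i j k \<in> ?A" for k
      by (metis (no_types, lifting) image_iff transpose_involutory)
    ultimately have "?B = transpose i j ` ?A"
      by blast
    then show "card ?A \<le> card ?B"
      by (simp add: card_image inj_on_transpose)
  next
    case False
    have "u k \<le> u' k" if "k \<le> d" for k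
      using False ij u' that by (auto simp: transpose_def)
    then have "?A \<subseteq> ?B"
      by (smt (verit) Collect_mono_iff atLeastAtMost_iff le_trans)
    then show "card ?A \<le> card ?B"
      by (intro card_mono) simp_all
  qed
qed

lemma count_ge_bruhat_le:
  assumes "bruhat_le n u u'"
  shows "count_ge d u t \<le> count_ge d u' t"
proof -
  have "(u, u') \<in> (bruhat_step n)\<^sup>*"
    using assms by (simp add: bruhat_le_def)
  then show ?thesis
  proof induction
    case (step u'' u')
    then show ?case
      using count_ge_bruhat_step[of u'' u' n d t] by simp
  qed simp
qed

lemma grassmannian_bruhat_le_pointwise:
  assumes w: "w \<in> grassmannian n d" and v: "v \<in> grassmannian n d" and "bruhat_le n w v"
    and "1 \<le> m" and "m \<le> d"
  shows "w m \<le> v m"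
proof (rule ccontr)
  assume "\<not> w m \<le> v m"
  have "{k \<in> {1..d}. w m \<le> w k} = {m..d}"
  proof (rule set_eqI)
    fix k
    show "k \<in> {k \<in> {1..d}. w m \<le> w k} \<longleftrightarrow> k \<in> {m..d}"
      using grassmannian_increasing[OF w, of k m] grassmannian_increasing[OF w, of m k]
        \<open>1 \<le> m\<close> \<open>m \<le> d\<close> by (cases k m rule: linorder_cases) auto
  qed
  then have "count_ge d w (w m) = d + 1 - m"
    by (simp add: count_ge_def)
  moreover have "{k \<in> {1..d}. w m \<le> v k} \<subseteq> {m + 1..d}"
  proof
    fix k
    assume k: "k \<in> {k \<in> {1..d}. w m \<le> v k}"
    have "v k \<le> v m" if "k \<le> m"
      using grassmannian_increasing[OF v, of k m] k that \<open>m \<le> d\<close> by (cases "k = m") auto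
    then show "k \<in> {m + 1..d}"
      using k \<open>\<not> w m \<le> v m\<close> by force
  qed
  then have "count_ge d v (w m) \<le> d - m"
    unfolding count_ge_def using card_mono[of "{m + 1..d}"] by fastforce
  moreover have "count_ge d w (w m) \<le> count_ge d v (w m)"
    by (rule count_ge_bruhat_le) fact
  ultimately show False
    using \<open>1 \<le> m\<close> \<open>m \<le> d\<close> by simp
qed

lemma lam_le_lam_bruhat:
  assumes "w \<in> grassmannian n d" and "v \<in> grassmannian n d" and "bruhat_le n w v"
    and "1 \<le> i" and "i \<le> d"
  shows "lam d w i \<le> lam d v i"
proof -
  have "w (d + 1 - i) \<le> v (d + 1 - i)"
    by (rule grassmannian_bruhat_le_pointwise[OF assms(1-3)]) (use assms in auto)
  then show ?thesis
    by (simp add: lam_def)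
qed

subsection \<open>Young diagrams\<close>

lemma mem_young_iff:
  "(i, j) \<in> young d la \<longleftrightarrow> 1 \<le> i \<and> i \<le> d \<and> 1 \<le> j \<and> j \<le> la i"
  by (simp add: young_def)

lemma young_down_closed:
  assumes "\<And>i i'. 1 \<le> i \<Longrightarrow> i \<le> i' \<Longrightarrow> i' \<le> d \<Longrightarrow> la i' \<le> la i"
    and "(i', j') \<in> young d la" and "1 \<le> i" and "1 \<le> j" and "i \<le> i'" and "j \<le> j'"
  shows "(i, j) \<in> young d la"
  using assms(1)[of i i'] assms(2-) by (auto simp: young_def)

lemma excite_stepI:
  assumes "C \<subseteq> young d mu" and "(a, c) \<in> C"
    and "(a + 1, c) \<in> young d mu - C" and "(a, c + 1) \<in> young d mu - C"
    and "(a + 1, c + 1) \<in> young d mu - C"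
    and "C' = (C - {(a, c)}) \<union> {(a + 1, c + 1)} \<or> C' = C \<union> {(a + 1, c + 1)}"
  shows "(C, C') \<in> excite_step d mu"
  unfolding excite_step_def using assms by blast

locale nested_shapes =
  fixes d :: nat and la mu :: "nat \<Rightarrow> nat"
  assumes la_antimono: "\<And>i i'. 1 \<le> i \<Longrightarrow> i \<le> i' \<Longrightarrow> i' \<le> d \<Longrightarrow> la i' \<le> la i"
    and mu_antimono: "\<And>i i'. 1 \<le> i \<Longrightarrow> i \<le> i' \<Longrightarrow> i' \<le> d \<Longrightarrow> mu i' \<le> mu i"
    and la_le_mu: "\<And>i. 1 \<le> i \<Longrightarrow> i \<le> d \<Longrightarrow> la i \<le> mu i"
begin

abbreviation "Dla \<equiv> young d la"
abbreviation "Dmu \<equiv> young d mu"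
abbreviation "tab T \<equiv> T \<in> sv_tableaux d la mu"
abbreviation "f \<equiv> fmap d la"

lemma Dla_down_closed:
  "(i', j') \<in> Dla \<Longrightarrow> 1 \<le> i \<Longrightarrow> 1 \<le> j \<Longrightarrow> i \<le> i' \<Longrightarrow> j \<le> j' \<Longrightarrow> (i, j) \<in> Dla"
  by (rule young_down_closed[OF la_antimono])

lemma Dmu_down_closed:
  "(i', j') \<in> Dmu \<Longrightarrow> 1 \<le> i \<Longrightarrow> 1 \<le> j \<Longrightarrow> i \<le> i' \<Longrightarrow> j \<le> j' \<Longrightarrow> (i, j) \<in> Dmu"
  by (rule young_down_closed[OF mu_antimono])

lemma finite_Dla: "finite Dla"
proof (rule finite_subset)
  show "Dla \<subseteq> {0..d} \<times> {0..la 1}"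
  proof
    fix p
    assume "p \<in> Dla"
    moreover obtain i j where "p = (i, j)"
      by (cases p)
    ultimately show "p \<in> {0..d} \<times> {0..la 1}"
      using la_antimono[of 1 i] by (auto simp: young_def)
  qed
qed simp

subsection \<open>Set-valued tableaux\<close>

lemma tab_empty_outside: "tab T \<Longrightarrow> b \<notin> Dla \<Longrightarrow> T b = {}"
  by (cases b) (simp add: sv_tableaux_def)

lemma tab_nonempty: "tab T \<Longrightarrow> b \<in> Dla \<Longrightarrow> T b \<noteq> {}"
  by (simp add: sv_tableaux_def)

lemma tab_entry_range: "tab T \<Longrightarrow> b \<in> Dla \<Longrightarrow> x \<in> T b \<Longrightarrow> 1 \<le> x \<and> x \<le> d"
  unfolding sv_tableaux_def by (auto dest!: bspec[of _ _ b])

lemma finite_tab_box: "tab T \<Longrightarrow> finite (T b)"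
  using tab_empty_outside[of T b] tab_entry_range[of T b]
  by (cases "b \<in> Dla") (auto intro: finite_subset[of _ "{1..d}"])

lemma tab_row:
  "tab T \<Longrightarrow> (i, j) \<in> Dla \<Longrightarrow> (i, j + 1) \<in> Dla \<Longrightarrow> a \<in> T (i, j) \<Longrightarrow> b \<in> T (i, j + 1)
   \<Longrightarrow> a \<le> b"
  by (simp add: sv_tableaux_def)

lemma tab_col:
  "tab T \<Longrightarrow> (i, j) \<in> Dla \<Longrightarrow> (i + 1, j) \<in> Dla \<Longrightarrow> a \<in> T (i, j) \<Longrightarrow> b \<in> T (i + 1, j)
   \<Longrightarrow> a < b"
  by (simp add: sv_tableaux_def)

lemma tab_restricted:
  "tab T \<Longrightarrow> (i, j) \<in> Dla \<Longrightarrow> x \<in> T (i, j) \<Longrightarrow> int x + int j - int i \<le> int (mu x)"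
  by (simp add: sv_tableaux_def)

lemma tab_row_mono:
  assumes t: "tab T" and "(i, j') \<in> Dla" and "j < j'" and "1 \<le> j"
    and a: "a \<in> T (i, j)" and "b \<in> T (i, j')"
  shows "a \<le> b"
proof -
  have "1 \<le> i"
    using \<open>(i, j') \<in> Dla\<close> by (simp add: mem_young_iff)
  have "Suc j \<le> j'"
    using \<open>j < j'\<close> by simp
  then show ?thesis
    using \<open>(i, j') \<in> Dla\<close> \<open>b \<in> T (i, j')\<close>
  proof (induction j' arbitrary: b rule: dec_induct)
    case base
    then show ?case
      using tab_row[OF t _ _ a, of b] Dla_down_closed[of i "Suc j" i j] \<open>1 \<le> j\<close> \<open>1 \<le> i\<close>
      by simp
  next
    case (step n)
    have "(i, n) \<in> Dla"
      using Dla_down_closed[OF step.prems(1), of i n] step.hyps \<open>1 \<le> j\<close> \<open>1 \<le> i\<close> by simp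
    moreover obtain c where "c \<in> T (i, n)"
      using tab_nonempty[OF t calculation] by auto
    ultimately show ?case
      using step tab_row[OF t, of i n c b] by fastforce
  qed
qed

lemma tab_col_mono:
  assumes t: "tab T" and "(i', j) \<in> Dla" and "i < i'" and "1 \<le> i"
    and a: "a \<in> T (i, j)" and "b \<in> T (i', j)"
  shows "a < b"
proof -
  have "1 \<le> j"
    using \<open>(i', j) \<in> Dla\<close> by (simp add: mem_young_iff)
  have "Suc i \<le> i'"
    using \<open>i < i'\<close> by simp
  then show ?thesis
    using \<open>(i', j) \<in> Dla\<close> \<open>b \<in> T (i', j)\<close>
  proof (induction i' arbitrary: b rule: dec_induct)
    case base
    then show ?case
      using tab_col[OF t _ _ a, of b] Dla_down_closed[of "Suc i" j i j] \<open>1 \<le> i\<close> \<open>1 \<le> j\<close>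
      by simp
  next
    case (step n)
    have "(n, j) \<in> Dla"
      using Dla_down_closed[OF step.prems(1), of n j] step.hyps \<open>1 \<le> i\<close> \<open>1 \<le> j\<close> by simp
    moreover obtain c where "c \<in> T (n, j)"
      using tab_nonempty[OF t calculation] by auto
    ultimately show ?case
      using step tab_col[OF t, of n j c b] by fastforce
  qed
qed

lemma tab_entries_mono:
  assumes t: "tab T" and ij: "(i, j) \<in> Dla" and ij': "(i', j') \<in> Dla"
    and "i \<le> i'" and "j \<le> j'" and "(i, j) \<noteq> (i', j')"
    and a: "a \<in> T (i, j)" and b: "b \<in> T (i', j')"
  shows "a \<le> b" and "i < i' \<Longrightarrow> a < b"
proof -
  have "1 \<le> i" and "1 \<le> j"
    using ij by (simp_all add: mem_young_iff)
  consider "j = j'" and "i < i'" | "j < j'" and "i = i'" | "j < j'" and "i < i'"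
    using assms(4-6) by fastforce
  then have "a \<le> b \<and> (i < i' \<longrightarrow> a < b)"
  proof cases
    case 1
    then show ?thesis
      using tab_col_mono[of T i' j i a b] t ij' a b \<open>1 \<le> i\<close> by simp
  next
    case 2
    then show ?thesis
      using tab_row_mono[of T i j' j a b] t ij' a b \<open>1 \<le> j\<close> by simp
  next
    case 3
    have "(i, j') \<in> Dla"
      using Dla_down_closed[OF ij', of i j'] ij' \<open>1 \<le> i\<close> 3 by (simp add: mem_young_iff)
    then obtain c where c: "c \<in> T (i, j')"
      using tab_nonempty[OF t] by auto
    have "a \<le> c"
      using tab_row_mono[OF t \<open>(i, j') \<in> Dla\<close> _ \<open>1 \<le> j\<close> a c] 3 by simp
    moreover have "c < b"
      using tab_col_mono[OF t ij' _ \<open>1 \<le> i\<close> c b] 3 by simp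
    ultimately show ?thesis
      by simp
  qed
  then show "a \<le> b" and "i < i' \<Longrightarrow> a < b"
    by simp_all
qed

lemma tab_entry_ge_row: "tab T \<Longrightarrow> (i, j) \<in> Dla \<Longrightarrow> x \<in> T (i, j) \<Longrightarrow> i \<le> x"
proof (induction i arbitrary: x)
  case (Suc i)
  show ?case
  proof (cases "i = 0")
    case True
    then show ?thesis
      using tab_entry_range[OF Suc.prems] by simp
  next
    case False
    then have "(i, j) \<in> Dla"
      using Dla_down_closed[OF Suc.prems(2), of i j] Suc.prems(2) by (simp add: mem_young_iff)
    moreover obtain y where "y \<in> T (i, j)"
      using tab_nonempty[OF Suc.prems(1) calculation] by auto
    ultimately show ?thesis
      using Suc.IH[of y] tab_col[of T i j y x] Suc.prems by simp
  qed
qed simp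

lemma tab_restricted_nat: "tab T \<Longrightarrow> (i, j) \<in> Dla \<Longrightarrow> x \<in> T (i, j) \<Longrightarrow> x + j - i \<le> mu x"
  using tab_restricted[of T i j x] tab_entry_ge_row[of T i j x] by linarith

lemma tab_diagonal_unique:
  assumes t: "tab T" and ij: "(i, j) \<in> Dla" and ij': "(i', j') \<in> Dla"
    and "a \<in> T (i, j)" and "a \<in> T (i', j')" and "j + i' = j' + i"
  shows "i = i' \<and> j = j'"
proof (cases i i' rule: linorder_cases)
  case less
  then show ?thesis
    using tab_entries_mono(2)[OF t ij ij', of a a] assms by simp
next
  case greater
  then show ?thesis
    using tab_entries_mono(2)[OF t ij' ij, of a a] assms by simp
qed (use assms in simp)

lemma mem_fmap_iff: "p \<in> f T \<longleftrightarrow> (\<exists>i j x. (i, j) \<in> Dla \<and> x \<in> T (i, j) \<and> p = (x, x + j - i))"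
  by (auto simp: fmap_def)

lemma fmap_memI: "(i, j) \<in> Dla \<Longrightarrow> x \<in> T (i, j) \<Longrightarrow> (x, x + j - i) \<in> f T"
  by (auto simp: mem_fmap_iff)

lemma mem_fmap_tabE:
  assumes "(r, c) \<in> f T" and t: "tab T"
  obtains i j where "(i, j) \<in> Dla" and "r \<in> T (i, j)" and "i \<le> r" and "r + j = c + i"
proof -
  obtain i j x where "(i, j) \<in> Dla" "x \<in> T (i, j)" "(r, c) = (x, x + j - i)"
    using assms(1) by (auto simp: mem_fmap_iff)
  moreover have "i \<le> x"
    using tab_entry_ge_row[OF t calculation(1,2)] .
  ultimately show ?thesis
    using that by auto
qed

lemma fmap_subset_Dmu: "tab T \<Longrightarrow> f T \<subseteq> Dmu"
proof
  fix p
  assume t: "tab T" and "p \<in> f T"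
  then obtain i j x where ij: "(i, j) \<in> Dla" "x \<in> T (i, j)" "p = (x, x + j - i)"
    by (auto simp: mem_fmap_iff)
  show "p \<in> Dmu"
    using tab_entry_ge_row[OF t ij(1,2)] tab_entry_range[OF t ij(1,2)]
      tab_restricted_nat[OF t ij(1,2)] ij by (auto simp: mem_young_iff)
qed

text \<open>Changing a single box changes \<open>f T\<close> only on that box's diagonal: the cells of the removed
  entries disappear, since no other box produces them.\<close>

lemma fmap_update:
  assumes t: "tab T" and ij: "(i, j) \<in> Dla"
  shows "f (T((i, j) := S)) = (f T - (\<lambda>x. (x, x + j - i)) ` (T (i, j) - S)) \<union> (\<lambda>x. (x, x + j - i)) ` S"
    (is "_ = (f T - ?removed) \<union> ?added")
proof (rule set_eqI, rule iffI)
  fix p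
  assume "p \<in> f (T((i, j) := S))"
  then obtain i' j' y where b: "(i', j') \<in> Dla" and y: "y \<in> (T((i, j) := S)) (i', j')"
    and p: "p = (y, y + j' - i')"
    by (auto simp: mem_fmap_iff)
  show "p \<in> (f T - ?removed) \<union> ?added"
  proof (cases "(i', j') = (i, j)")
    case True
    then show ?thesis
      using y p by auto
  next
    case False
    then have yT: "y \<in> T (i', j')"
      using y by (auto split: if_splits)
    have "p \<notin> ?removed"
    proof
      assume "p \<in> ?removed"
      then have "y \<in> T (i, j)" and "y + j' - i' = y + j - i"
        using p by auto
      moreover have "i' \<le> y" and "i \<le> y"
        using tab_entry_ge_row[OF t b yT] tab_entry_ge_row[OF t ij \<open>y \<in> T (i, j)\<close>] by simp_all
      ultimately have "j + i' = j' + i"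
        by linarith
      then show False
        using tab_diagonal_unique[OF t ij b \<open>y \<in> T (i, j)\<close> yT] False by simp
    qed
    then show ?thesis
      using fmap_memI[of _ _ _ T, OF b yT] p by simp
  qed
next
  fix p
  assume "p \<in> (f T - ?removed) \<union> ?added"
  then show "p \<in> f (T((i, j) := S))"
  proof
    assume p: "p \<in> f T - ?removed"
    then obtain i' j' y where b: "(i', j') \<in> Dla" and "y \<in> T (i', j')" and "p = (y, y + j' - i')"
      by (auto simp: mem_fmap_iff)
    with p have "y \<in> (T((i, j) := S)) (i', j')"
      by (cases "(i', j') = (i, j)") auto
    then show ?thesis
      using fmap_memI[OF b] \<open>p = (y, y + j' - i')\<close> by simp
  next
    assume "p \<in> ?added"
    then show ?thesis
      using fmap_memI[OF ij, of _ "T((i, j) := S)"] by auto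
  qed
qed

lemma fmap_raise:
  assumes t: "tab T" and ij: "(i, j) \<in> Dla" and a: "a \<in> T (i, j)"
  shows "f (T((i, j) := insert (a + 1) (T (i, j) - {a})))
           = (f T - {(a, a + j - i)}) \<union> {(a + 1, a + j - i + 1)}"
    and "f (T((i, j) := insert (a + 1) (T (i, j)))) = f T \<union> {(a + 1, a + j - i + 1)}"
proof -
  have "i \<le> a"
    using tab_entry_ge_row[OF t ij a] .
  moreover have "(x, x + j - i) \<in> f T" if "x \<in> T (i, j)" for x
    using fmap_memI[of i j x T] ij that by simp
  ultimately show "f (T((i, j) := insert (a + 1) (T (i, j) - {a})))
           = (f T - {(a, a + j - i)}) \<union> {(a + 1, a + j - i + 1)}"
    and "f (T((i, j) := insert (a + 1) (T (i, j)))) = f T \<union> {(a + 1, a + j - i + 1)}"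
    unfolding fmap_update[OF t ij] using a by auto
qed


subsection \<open>Raising and lowering entries\<close>

lemma tab_update:
  assumes t: "tab T" and ij: "(i, j) \<in> Dla" and S: "S \<noteq> {}" "S \<subseteq> insert y (T (i, j))"
    and y: "1 \<le> y" "y \<le> d" "int y + int j - int i \<le> int (mu y)"
    and right: "\<And>z. (i, j + 1) \<in> Dla \<Longrightarrow> z \<in> T (i, j + 1) \<Longrightarrow> y \<le> z"
    and left: "\<And>z. (i, j - 1) \<in> Dla \<Longrightarrow> z \<in> T (i, j - 1) \<Longrightarrow> z \<le> y"
    and below: "\<And>z. (i + 1, j) \<in> Dla \<Longrightarrow> z \<in> T (i + 1, j) \<Longrightarrow> y < z"
    and above: "\<And>z. (i - 1, j) \<in> Dla \<Longrightarrow> z \<in> T (i - 1, j) \<Longrightarrow> z < y"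
  shows "tab (T((i, j) := S))"
proof -
  let ?T = "T((i, j) := S)"
  have mem: "w \<in> T c \<or> (c = (i, j) \<and> w = y)" if "w \<in> ?T c" for c w
    using S that by (auto split: if_splits)
  have "\<forall>b. b \<notin> Dla \<longrightarrow> ?T b = {}"
    using tab_empty_outside[OF t] ij by auto
  moreover have "\<forall>b \<in> Dla. ?T b \<noteq> {} \<and> ?T b \<subseteq> {1..d}"
  proof
    fix b
    assume b: "b \<in> Dla"
    have "?T b \<subseteq> {1..d}"
    proof
      fix w
      assume "w \<in> ?T b"
      then show "w \<in> {1..d}"
        using mem[of w b] tab_entry_range[OF t b, of w] y by auto
    qed
    then show "?T b \<noteq> {} \<and> ?T b \<subseteq> {1..d}"
      using S tab_nonempty[OF t b] by auto
  qed
  moreover have "\<forall>a \<in> ?T (p, q). \<forall>b \<in> ?T (p, q + 1). a \<le> b"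
    if pq: "(p, q) \<in> Dla" "(p, q + 1) \<in> Dla" for p q
  proof (intro ballI)
    fix a b
    assume "a \<in> ?T (p, q)" and "b \<in> ?T (p, q + 1)"
    from mem[OF this(1)] mem[OF this(2)] show "a \<le> b"
    proof (elim disjE conjE)
      assume "a \<in> T (p, q)" and "b \<in> T (p, q + 1)"
      then show ?thesis
        using tab_row[OF t pq] by blast
    next
      assume "a \<in> T (p, q)" and "(p, q + 1) = (i, j)" and "b = y"
      then show ?thesis
        using left pq by auto
    next
      assume "(p, q) = (i, j)" and "a = y" and "b \<in> T (p, q + 1)"
      then show ?thesis
        using right pq by auto
    qed auto
  qed
  moreover have "\<forall>a \<in> ?T (p, q). \<forall>b \<in> ?T (p + 1, q). a < b"
    if pq: "(p, q) \<in> Dla" "(p + 1, q) \<in> Dla" for p q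
  proof (intro ballI)
    fix a b
    assume "a \<in> ?T (p, q)" and "b \<in> ?T (p + 1, q)"
    from mem[OF this(1)] mem[OF this(2)] show "a < b"
    proof (elim disjE conjE)
      assume "a \<in> T (p, q)" and "b \<in> T (p + 1, q)"
      then show ?thesis
        using tab_col[OF t pq] by blast
    next
      assume "a \<in> T (p, q)" and "(p + 1, q) = (i, j)" and "b = y"
      then show ?thesis
        using above pq by auto
    next
      assume "(p, q) = (i, j)" and "a = y" and "b \<in> T (p + 1, q)"
      then show ?thesis
        using below pq by auto
    qed auto
  qed
  moreover have "\<forall>x \<in> ?T (p, q). int x + int q - int p \<le> int (mu x)" if "(p, q) \<in> Dla" for p q
  proof
    fix x
    assume "x \<in> ?T (p, q)"
    from mem[OF this] show "int x + int q - int p \<le> int (mu x)"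
      using tab_restricted[OF t that] y(3) by auto
  qed
  ultimately show ?thesis
    unfolding sv_tableaux_def by blast
qed

text \<open>Raising an entry \<open>a\<close> of box \<open>(i, j)\<close> to \<open>a + 1\<close> moves the cell \<open>(a, c)\<close> of \<open>f T\<close> to
  \<open>(a + 1, c + 1)\<close>. The emptiness of the cells \<open>(a + 1, c)\<close> and \<open>(a, c + 1)\<close> required by an
  excitation says that \<open>a + 1\<close> is not an entry of the boxes below and to the right.\<close>

lemma tab_raise:
  assumes t: "tab T" and ij: "(i, j) \<in> Dla" and a: "a \<in> T (i, j)"
    and below_free: "(a + 1, a + j - i) \<notin> f T" and right_free: "(a, a + j - i + 1) \<notin> f T"
    and diag: "(a + 1, a + j - i + 1) \<in> Dmu"
    and S: "S \<noteq> {}" "S \<subseteq> insert (a + 1) (T (i, j))"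
  shows "tab (T((i, j) := S))"
proof (rule tab_update[OF t ij S])
  have "i \<le> a"
    using tab_entry_ge_row[OF t ij a] .
  with diag show "1 \<le> a + 1" and "a + 1 \<le> d" and "int (a + 1) + int j - int i \<le> int (mu (a + 1))"
    by (auto simp: mem_young_iff)
  show "a + 1 \<le> z" if "(i, j + 1) \<in> Dla" and "z \<in> T (i, j + 1)" for z
  proof -
    have "z \<noteq> a"
      using fmap_memI[of i "j + 1" z T] that right_free \<open>i \<le> a\<close> by (auto simp: Suc_diff_le)
    then show ?thesis
      using tab_row[OF t ij that(1) a that(2)] by simp
  qed
  show "z \<le> a + 1" if "(i, j - 1) \<in> Dla" and "z \<in> T (i, j - 1)" for z
    using tab_row[OF t that(1) _ that(2), of a] ij a that(1) by (simp add: mem_young_iff)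
  show "a + 1 < z" if "(i + 1, j) \<in> Dla" and "z \<in> T (i + 1, j)" for z
  proof -
    have "z \<noteq> a + 1"
      using fmap_memI[of "i + 1" j z T] that below_free \<open>i \<le> a\<close> by auto
    then show ?thesis
      using tab_col[OF t ij that(1) a that(2)] by simp
  qed
  show "z < a + 1" if "(i - 1, j) \<in> Dla" and "z \<in> T (i - 1, j)" for z
    using tab_col[OF t that(1) _ that(2), of a] ij a that(1) by (simp add: mem_young_iff)
qed

lemma excite_step_fmap_imageE:
  assumes t: "tab T" and "(f T, C) \<in> excite_step d mu"
  obtains T' where "tab T'" and "C = f T'"
proof -
  obtain a c where ac: "(a, c) \<in> f T" and below_free: "(a + 1, c) \<notin> f T"
    and right_free: "(a, c + 1) \<notin> f T" and diag: "(a + 1, c + 1) \<in> Dmu"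
    and C: "C = (f T - {(a, c)}) \<union> {(a + 1, c + 1)} \<or> C = f T \<union> {(a + 1, c + 1)}"
    using assms(2) unfolding excite_step_def by blast
  obtain i j where ij: "(i, j) \<in> Dla" and a: "a \<in> T (i, j)" and "i \<le> a" and "a + j = c + i"
    using mem_fmap_tabE[OF ac t] .
  then have c: "c = a + j - i"
    by simp
  from C show thesis
  proof
    assume C: "C = (f T - {(a, c)}) \<union> {(a + 1, c + 1)}"
    let ?T' = "T((i, j) := insert (a + 1) (T (i, j) - {a}))"
    have "tab ?T'"
      by (rule tab_raise[OF t ij a]) (use below_free right_free diag c in auto)
    moreover have "C = f ?T'"
      using fmap_raise(1)[OF t ij a] C c by simp
    ultimately show thesis
      by (rule that)
  next
    assume C: "C = f T \<union> {(a + 1, c + 1)}"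
    let ?T' = "T((i, j) := insert (a + 1) (T (i, j)))"
    have "tab ?T'"
      by (rule tab_raise[OF t ij a]) (use below_free right_free diag c in auto)
    moreover have "C = f ?T'"
      using fmap_raise(2)[OF t ij a] C c by simp
    ultimately show thesis
      by (rule that)
  qed
qed

definition lower_entry :: "(nat \<times> nat \<Rightarrow> nat set) \<Rightarrow> nat \<times> nat \<Rightarrow> nat \<Rightarrow> nat \<times> nat \<Rightarrow> nat set"
  where "lower_entry T b x = T(b := insert (x - 1) (T b - {x}))"

text \<open>Undoing an excitation: the entry to lower is the least entry \<open>x\<close> exceeding its row
  index, taken in the leftmost box where it does so. The two minimality conditions are exactly
  what keeps the lowered filling a tableau and the cells to the right of and below the new cell
  \<open>(x - 1, x - 1 + j - i)\<close> empty.\<close>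

lemma lowerable_entry_exists:
  assumes "(i0, j0) \<in> Dla" and "x0 \<in> T (i0, j0)" and "i0 < x0"
  obtains i j x where "(i, j) \<in> Dla" and "x \<in> T (i, j)" and "i < x"
    and "\<And>i' j' y. (i', j') \<in> Dla \<Longrightarrow> y \<in> T (i', j') \<Longrightarrow> i' < y \<Longrightarrow> x \<le> y"
    and "\<And>i' j'. (i', j') \<in> Dla \<Longrightarrow> x \<in> T (i', j') \<Longrightarrow> i' < x \<Longrightarrow> j \<le> j'"
proof -
  define P where "P y \<longleftrightarrow> (\<exists>i j. (i, j) \<in> Dla \<and> y \<in> T (i, j) \<and> i < y)" for y
  define x where "x = (LEAST y. P y)"
  have "P x"
    unfolding x_def by (rule LeastI[of P x0]) (use assms in \<open>unfold P_def, blast\<close>)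
  have least: "x \<le> y" if "P y" for y
    unfolding x_def using that by (rule Least_le)
  define Q where "Q j \<longleftrightarrow> (\<exists>i. (i, j) \<in> Dla \<and> x \<in> T (i, j) \<and> i < x)" for j
  define j where "j = (LEAST j. Q j)"
  have "Q j"
    unfolding j_def by (rule LeastI_ex) (use \<open>P x\<close> in \<open>unfold P_def Q_def, blast\<close>)
  have leftmost: "j \<le> j'" if "Q j'" for j'
    unfolding j_def using that by (rule Least_le)
  obtain i where "(i, j) \<in> Dla" and "x \<in> T (i, j)" and "i < x"
    using \<open>Q j\<close> unfolding Q_def by blast
  then show thesis
  proof (rule that)
    show "x \<le> y" if "(i', j') \<in> Dla" and "y \<in> T (i', j')" and "i' < y" for i' j' y
      using least that unfolding P_def by blast
    show "j \<le> j'" if "(i', j') \<in> Dla" and "x \<in> T (i', j')" and "i' < x" for i' j'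
      using leftmost that unfolding Q_def by blast
  qed
qed

context
  fixes T i j x
  assumes t: "tab T" and ij: "(i, j) \<in> Dla" and x: "x \<in> T (i, j)" and "i < x"
    and least: "\<And>i' j' y. (i', j') \<in> Dla \<Longrightarrow> y \<in> T (i', j') \<Longrightarrow> i' < y \<Longrightarrow> x \<le> y"
    and leftmost: "\<And>i' j'. (i', j') \<in> Dla \<Longrightarrow> x \<in> T (i', j') \<Longrightarrow> i' < x \<Longrightarrow> j \<le> j'"
begin

lemma fmap_lower_below_free: "(x, x - 1 + j - i) \<notin> f T"
proof
  assume "(x, x - 1 + j - i) \<in> f T"
  then obtain i' j' where b: "(i', j') \<in> Dla" and x': "x \<in> T (i', j')"
    and "i' \<le> x" and "x + j' = x - 1 + j - i + i'"
    using mem_fmap_tabE t by blast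
  then have diag: "j + i' = j' + i + 1"
    using \<open>i < x\<close> by linarith
  show False
  proof (cases "i < i'")
    case True
    then show False
      using tab_entries_mono(2)[OF t ij b _ _ _ x x'] diag by simp
  next
    case False
    then show False
      using leftmost[OF b x'] \<open>i < x\<close> diag by linarith
  qed
qed

lemma fmap_lower_right_free: "(x - 1, x + j - i) \<notin> f T"
proof
  assume "(x - 1, x + j - i) \<in> f T"
  then obtain i' j' where b: "(i', j') \<in> Dla" and x': "x - 1 \<in> T (i', j')"
    and "i' \<le> x - 1" and "x - 1 + j' = x + j - i + i'"
    using mem_fmap_tabE t by blast
  then have diag: "j' + i = j + 1 + i'"
    using \<open>i < x\<close> by linarith
  show False
  proof (cases "i \<le> i'")
    case True
    then show False
      using tab_entries_mono(1)[OF t ij b _ _ _ x x'] diag \<open>i < x\<close> by simp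
  next
    case False
    then show False
      using least[OF b x'] \<open>i < x\<close> by linarith
  qed
qed

lemma tab_lower_entry: "tab (lower_entry T (i, j) x)"
  unfolding lower_entry_def
proof (rule tab_update[OF t ij])
  have "1 \<le> i" and "x \<le> d"
    using ij tab_entry_range[OF t ij x] by (simp_all add: mem_young_iff)
  then have "mu x \<le> mu (x - 1)"
    using mu_antimono[of "x - 1" x] \<open>i < x\<close> by simp
  then show "int (x - 1) + int j - int i \<le> int (mu (x - 1))"
    using tab_restricted[OF t ij x] \<open>i < x\<close> by linarith
  show "1 \<le> x - 1" and "x - 1 \<le> d"
    using \<open>1 \<le> i\<close> \<open>i < x\<close> \<open>x \<le> d\<close> by simp_all
  show "x - 1 \<le> z" if "(i, j + 1) \<in> Dla" and "z \<in> T (i, j + 1)" for z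
    using tab_row[OF t ij that(1) x that(2)] by simp
  show "z \<le> x - 1" if "(i, j - 1) \<in> Dla" and "z \<in> T (i, j - 1)" for z
  proof -
    have "z \<le> x"
      using tab_row[OF t that(1) _ that(2), of x] ij x that(1) by (simp add: mem_young_iff)
    moreover have "z \<noteq> x"
      using leftmost[of i "j - 1"] that \<open>i < x\<close> by (auto simp: mem_young_iff)
    ultimately show ?thesis
      by simp
  qed
  show "x - 1 < z" if "(i + 1, j) \<in> Dla" and "z \<in> T (i + 1, j)" for z
    using tab_col[OF t ij that(1) x that(2)] by simp
  show "z < x - 1" if "(i - 1, j) \<in> Dla" and "z \<in> T (i - 1, j)" for z
  proof -
    have "z < x"
      using tab_col[OF t that(1) _ that(2), of x] ij x that(1) by (simp add: mem_young_iff)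
    moreover have "z \<noteq> x - 1"
    proof
      assume z: "z = x - 1"
      then have "i - 1 < z"
        using \<open>i < x\<close> that(1) by (auto simp: mem_young_iff)
      then show False
        using least[OF that] z \<open>i < x\<close> by simp
    qed
    ultimately show ?thesis
      by simp
  qed
qed blast+

lemma excite_step_lower_entry: "(f (lower_entry T (i, j) x), f T) \<in> excite_step d mu"
proof -
  define a where "a = x - 1"
  define c where "c = a + j - i"
  define T0 where "T0 = lower_entry T (i, j) x"
  have xa: "x = a + 1" and "i \<le> a"
    using \<open>i < x\<close> by (simp_all add: a_def)
  have c1: "x + j - i = c + 1"
    using xa \<open>i \<le> a\<close> by (simp add: c_def)
  have t0: "tab T0"
    unfolding T0_def by (rule tab_lower_entry)
  have a0: "a \<in> T0 (i, j)"
    by (simp add: T0_def lower_entry_def a_def)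
  have "T (i, j) - insert a (T (i, j) - {x}) = {x}"
    using x xa by auto
  then have f0: "f T0 = (f T - {(x, c + 1)}) \<union> (\<lambda>y. (y, y + j - i)) ` insert a (T (i, j) - {x})"
    using fmap_update[OF t ij, of "insert a (T (i, j) - {x})"] c1
    by (simp add: T0_def lower_entry_def a_def)
  have "(a, c) \<in> f T0"
    using fmap_memI[of i j a T0] ij a0 by (simp add: c_def)
  moreover have "(x, c) \<notin> f T0"
  proof -
    have "(x, c) \<notin> f T"
      using fmap_lower_below_free by (simp add: a_def c_def)
    then show ?thesis
      using f0 xa by auto
  qed
  moreover have "(a, c + 1) \<notin> f T0"
  proof -
    have "(a, c + 1) \<notin> f T"
      using fmap_lower_right_free c1 by (simp add: a_def)
    then show ?thesis
      using f0 xa \<open>i \<le> a\<close> by (auto simp: c_def)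
  qed
  moreover have "(x, c + 1) \<notin> f T0"
    using f0 xa by auto
  moreover have "(x, c + 1) \<in> Dmu"
    using fmap_subset_Dmu[OF t] fmap_memI[of i j x T] ij x c1 by auto
  moreover have "1 \<le> i" and "1 \<le> j" and "x \<le> d"
    using ij tab_entry_range[OF t ij x] by (simp_all add: mem_young_iff)
  then have "mu x \<le> mu a"
    using mu_antimono[of a x] xa \<open>i \<le> a\<close> by simp
  ultimately have cells: "(x, c) \<in> Dmu - f T0" "(a, c + 1) \<in> Dmu - f T0" "(x, c + 1) \<in> Dmu - f T0"
    using Dmu_down_closed[of x "c + 1" x c] \<open>1 \<le> i\<close> \<open>i \<le> a\<close> \<open>1 \<le> j\<close> xa
    by (auto simp: mem_young_iff c_def)
  have "f T = (f T0 - {(a, c)}) \<union> {(a + 1, c + 1)} \<or> f T = f T0 \<union> {(a + 1, c + 1)}"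
  proof (cases "a \<in> T (i, j)")
    case True
    then have "insert (a + 1) (T0 (i, j)) = T (i, j)"
      using True x xa by (auto simp: T0_def lower_entry_def)
    then have "T = T0((i, j) := insert (a + 1) (T0 (i, j)))"
      by (simp add: T0_def lower_entry_def)
    then show ?thesis
      using fmap_raise(2)[OF t0 ij a0] by (simp add: c_def)
  next
    case False
    then have "insert (a + 1) (T0 (i, j) - {a}) = T (i, j)"
      using False x xa by (auto simp: T0_def lower_entry_def)
    then have "T = T0((i, j) := insert (a + 1) (T0 (i, j) - {a}))"
      by (simp add: T0_def lower_entry_def)
    then show ?thesis
      using fmap_raise(1)[OF t0 ij a0] by (simp add: c_def)
  qed
  then have "(f T0, f T) \<in> excite_step d mu"
    using excite_stepI[OF fmap_subset_Dmu[OF t0] \<open>(a, c) \<in> f T0\<close>] cells xa by simp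
  then show ?thesis
    by (simp add: T0_def)
qed

end

definition tab_weight :: "(nat \<times> nat \<Rightarrow> nat set) \<Rightarrow> nat"
  where "tab_weight T = (\<Sum>b\<in>Dla. \<Sum>y\<in>T b. y)"

lemma tab_weight_lower_entry_less:
  assumes t: "tab T" and ij: "(i, j) \<in> Dla" and x: "x \<in> T (i, j)" and "0 < x"
  shows "tab_weight (lower_entry T (i, j) x) < tab_weight T"
proof -
  have fin: "finite (T (i, j) - {x})"
    using finite_tab_box[OF t] by simp
  have "(\<Sum>y\<in>insert (x - 1) (T (i, j) - {x}). y) \<le> (x - 1) + (\<Sum>y\<in>T (i, j) - {x}. y)"
    using fin by (simp add: sum.insert_if)
  also have "\<dots> < x + (\<Sum>y\<in>T (i, j) - {x}. y)"
    using \<open>0 < x\<close> by simp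
  also have "\<dots> = (\<Sum>y\<in>T (i, j). y)"
    using sum.remove[OF finite_tab_box[OF t] x, of "\<lambda>y. y"] by simp
  finally have box: "(\<Sum>y\<in>insert (x - 1) (T (i, j) - {x}). y) < (\<Sum>y\<in>T (i, j). y)" .
  show ?thesis
    unfolding tab_weight_def lower_entry_def
    by (rule sum_strict_mono_ex1[OF finite_Dla]) (use box ij in auto)
qed

definition row_filling :: "nat \<times> nat \<Rightarrow> nat set"
  where "row_filling b = (if b \<in> Dla then {fst b} else {})"

lemma tab_row_filling: "tab row_filling"
  unfolding sv_tableaux_def row_filling_def
  by (auto simp: mem_young_iff intro: order.trans[OF _ la_le_mu])

lemma fmap_eq_Dla_if_entries_le_row:
  assumes t: "tab T" and le: "\<And>i j x. (i, j) \<in> Dla \<Longrightarrow> x \<in> T (i, j) \<Longrightarrow> x \<le> i"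
  shows "f T = Dla"
proof (rule set_eqI, rule iffI)
  fix p
  assume "p \<in> f T"
  then obtain i j where "(i, j) \<in> Dla" and "fst p \<in> T (i, j)" and "i \<le> fst p"
    and "fst p + j = snd p + i"
    using mem_fmap_tabE[OF _ t, of "fst p" "snd p"] by auto
  moreover have "fst p = i"
    using le calculation by force
  ultimately show "p \<in> Dla"
    by (cases p) auto
next
  fix p
  assume p: "p \<in> Dla"
  obtain i j where "p = (i, j)"
    by (cases p)
  moreover obtain x where "x \<in> T (i, j)"
    using tab_nonempty[OF t] p calculation by blast
  moreover have "x = i"
    using le tab_entry_ge_row[OF t] p calculation by force
  ultimately show "p \<in> f T"
    using fmap_memI[of i j x T] p by simp
qed

lemma fmap_row_filling: "f row_filling = Dla"
  by (rule fmap_eq_Dla_if_entries_le_row[OF tab_row_filling]) (auto simp: row_filling_def)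

lemma fmap_in_excitations: "tab T \<Longrightarrow> f T \<in> excitations d la mu"
proof (induction "tab_weight T" arbitrary: T rule: less_induct)
  case less
  show ?case
  proof (cases "\<exists>i j x. (i, j) \<in> Dla \<and> x \<in> T (i, j) \<and> i < x")
    case False
    then have "f T = Dla"
      using fmap_eq_Dla_if_entries_le_row[OF less.prems] by (meson not_le)
    then show ?thesis
      by (simp add: excitations_def)
  next
    case True
    then obtain i0 j0 x0 where "(i0, j0) \<in> Dla" and "x0 \<in> T (i0, j0)" and "i0 < x0"
      by blast
    then obtain i j x where ij: "(i, j) \<in> Dla" and x: "x \<in> T (i, j)" and "i < x"
      and least: "\<And>i' j' y. (i', j') \<in> Dla \<Longrightarrow> y \<in> T (i', j') \<Longrightarrow> i' < y \<Longrightarrow> x \<le> y"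
      and leftmost: "\<And>i' j'. (i', j') \<in> Dla \<Longrightarrow> x \<in> T (i', j') \<Longrightarrow> i' < x \<Longrightarrow> j \<le> j'"
      by (rule lowerable_entry_exists) blast
    let ?T0 = "lower_entry T (i, j) x"
    have "f ?T0 \<in> excitations d la mu"
      using less tab_lower_entry[OF less.prems ij x \<open>i < x\<close> least leftmost]
        tab_weight_lower_entry_less[OF less.prems ij x] \<open>i < x\<close> by simp
    then show ?thesis
      using excite_step_lower_entry[OF less.prems ij x \<open>i < x\<close> least leftmost]
      unfolding excitations_def by (simp add: rtrancl_into_rtrancl)
  qed
qed

lemma excitation_fmap_imageE:
  assumes "C \<in> excitations d la mu"
  obtains T where "tab T" and "C = f T"
proof -
  have "(Dla, C) \<in> (excite_step d mu)\<^sup>*"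
    using assms by (simp add: excitations_def)
  then have "\<exists>T. tab T \<and> C = f T"
  proof induction
    case base
    show ?case
      using tab_row_filling fmap_row_filling by blast
  next
    case (step C C')
    then obtain T where "tab T" and "C = f T"
      by blast
    with step.hyps(2) obtain T' where "tab T'" and "C' = f T'"
      using excite_step_fmap_imageE by blast
    then show ?case
      by blast
  qed
  then show thesis
    using that by blast
qed

subsection \<open>Injectivity\<close>

text \<open>Box \<open>(i, j)\<close> of \<open>T\<close> is determined by \<open>f T\<close> and the earlier boxes (smaller \<open>i + j\<close>).
  An entry \<open>x\<close> of it gives the cell \<open>(x, x + j - i)\<close>, which comes from a box of \<open>T'\<close> on the
  same diagonal. An earlier box is excluded by diagonal uniqueness in \<open>T\<close>. A later box lies
  below row \<open>i\<close>, so \<open>T' (i + 1, j)\<close> has an entry \<open>z \<le> x\<close>; its cell comes from a box of \<open>T\<close>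
  below row \<open>i\<close> (earlier boxes being excluded again), which forces \<open>z > x\<close>.\<close>

lemma fmap_eq_box_subset:
  assumes t: "tab T" and t': "tab T'" and eq: "f T = f T'"
    and earlier: "\<And>p q. (p, q) \<in> Dla \<Longrightarrow> p + q < i + j \<Longrightarrow> T (p, q) = T' (p, q)"
    and ij: "(i, j) \<in> Dla"
  shows "T (i, j) \<subseteq> T' (i, j)"
proof
  fix x
  assume x: "x \<in> T (i, j)"
  have "i \<le> x"
    using tab_entry_ge_row[OF t ij x] .
  have "(x, x + j - i) \<in> f T'"
    using fmap_memI[of i j x T] ij x eq by simp
  then obtain i' j' where b': "(i', j') \<in> Dla" and x': "x \<in> T' (i', j')" and "x + j' = x + j - i + i'"
    using mem_fmap_tabE t' by blast
  then have diag: "j + i' = j' + i"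
    using \<open>i \<le> x\<close> by linarith
  show "x \<in> T' (i, j)"
  proof (cases i' i rule: linorder_cases)
    case equal
    then show ?thesis
      using diag x' by simp
  next
    case less
    then have "x \<in> T (i', j')"
      using earlier[OF b'] diag x' by simp
    then show ?thesis
      using tab_diagonal_unique[OF t ij b' x] diag less by simp
  next
    case greater
    have "j < j'"
      using diag greater by linarith
    have below: "(i + 1, j) \<in> Dla"
      using Dla_down_closed[OF b', of "i + 1" j] ij greater \<open>j < j'\<close> by (simp add: mem_young_iff)
    obtain z where z: "z \<in> T' (i + 1, j)"
      using tab_nonempty[OF t' below] by auto
    have "z \<le> x"
      using tab_entries_mono(1)[OF t' below b' _ _ _ z x'] greater \<open>j < j'\<close> by simp
    have "i + 1 \<le> z"
      using tab_entry_ge_row[OF t' below z] .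
    have "(z, z + j - (i + 1)) \<in> f T"
      using fmap_memI[of "i + 1" j z T'] below z eq by simp
    then obtain i'' j'' where b'': "(i'', j'') \<in> Dla" and z': "z \<in> T (i'', j'')"
      and "z + j'' = z + j - (i + 1) + i''"
      using mem_fmap_tabE t by blast
    then have diag': "j + i'' = j'' + i + 1"
      using \<open>i + 1 \<le> z\<close> by linarith
    show ?thesis
    proof (cases "i'' \<le> i")
      case True
      then have "z \<in> T' (i'', j'')"
        using earlier[OF b''] diag' z' by simp
      then show ?thesis
        using tab_diagonal_unique[OF t' b'' below _ z] diag' True by simp
    next
      case False
      then have "x < z"
        using tab_entries_mono(2)[OF t ij b'' _ _ _ x z'] diag' by simp
      then show ?thesis
        using \<open>z \<le> x\<close> by simp
    qed
  qed
qed

lemma inj_on_fmap: "inj_on f (sv_tableaux d la mu)"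
proof (rule inj_onI)
  fix T T'
  assume t: "tab T" and t': "tab T'" and eq: "f T = f T'"
  have "T (i, j) = T' (i, j)" if "(i, j) \<in> Dla" for i j
    using that
  proof (induction "i + j" arbitrary: i j rule: less_induct)
    case less
    then show ?case
      using fmap_eq_box_subset[OF t t' eq] fmap_eq_box_subset[OF t' t eq[symmetric]]
      by (metis subset_antisym)
  qed
  then show "T = T'"
    using tab_empty_outside[OF t] tab_empty_outside[OF t'] by (metis surj_pair ext)
qed

theorem bij_betw_fmap: "bij_betw f (sv_tableaux d la mu) (excitations d la mu)"
  unfolding bij_betw_def
proof
  show "inj_on f (sv_tableaux d la mu)"
    by (rule inj_on_fmap)
  show "f ` sv_tableaux d la mu = excitations d la mu"
    using fmap_in_excitations excitation_fmap_imageE by blast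
qed

end

theorem proposition4p18:
  fixes n d :: nat and w v :: "nat \<Rightarrow> nat"
  assumes "1 \<le> d" and "d < n"
    and "w \<in> grassmannian n d" and "v \<in> grassmannian n d"
    and "bruhat_le n w v"
  shows "bij_betw (fmap d (lam d w)) (sv_tableaux d (lam d w) (lam d v))
                   (excitations d (lam d w) (lam d v))"
proof -
  interpret nested_shapes d "lam d w" "lam d v"
  proof
    show "lam d w i' \<le> lam d w i" if "1 \<le> i" and "i \<le> i'" and "i' \<le> d" for i i'
      using lam_antimono[OF grassmannian_increasing[OF assms(3)] that] .
    show "lam d v i' \<le> lam d v i" if "1 \<le> i" and "i \<le> i'" and "i' \<le> d" for i i'
      using lam_antimono[OF grassmannian_increasing[OF assms(4)] that] .
    show "lam d w i \<le> lam d v i" if "1 \<le> i" and "i \<le> d" for i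
      using lam_le_lam_bruhat[OF assms(3-5) that] .
  qed
  show ?thesis
    by (rule bij_betw_fmap)
qed

end
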